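(* Let $\Sigma$ be a finite nonempty set of $d\times d$ real matrices with nonnegative entries, and let $i\in\{1,\dots,d\}$. For every $B\ge 0$ there exists a constant $C$ such that for all positive integers $m,n$ with $|m-n|\le B$ and $\|\Sigma^n\|_{i,i}>0$, \[ \frac{\|\Sigma^m\|_{i,i}}{\|\Sigma^n\|_{i,i}}\le C . \]
   Context: For $n\ge1$, $\|\Sigma^n\|_{i,j}=\max_{A_1,\dots,A_n\in\Sigma}(A_1\cdots A_n)_{i,j}$. *)

theory Defs
  imports "HOL-Analysis.Analysis"
begin

definition mat_list_prod :: "(real^'n^'n) list \<Rightarrow> real^'n^'n" where
  "mat_list_prod As = foldr (\<lambda>A P. A ** P) As (mat 1)"

(* ||Sigma^n||_{i,j} = max over A_1,...,A_n in Sigma of (A_1 ... A_n)_{i,j}  (meant for n >= 1) *)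
definition joint_entry_max :: "(real^'n^'n) set \<Rightarrow> nat \<Rightarrow> 'n \<Rightarrow> 'n \<Rightarrow> real" where
  "joint_entry_max \<Sigma> n i j =
     Max {(mat_list_prod As) $ i $ j | As. set As \<subseteq> \<Sigma> \<and> length As = n}"

end

(* Write J_t(k,l) for the largest (k,l) entry of a product of t matrices from Sigma and d for the
   dimension. Concatenation gives J_(a+b)(k,l) >= J_a(k,j) J_b(j,l), and splitting an optimal product
   gives J_(a+b)(k,l) <= d J_a(k,j) J_b(j,l) for some j. The lengths t with J_t(i,i) > 0 form a
   submonoid of the naturals, which contains every large multiple of its period g.
   For large m, split an optimal product of length m into a prefix of length m - S ending at some k
   and a tail of fixed length S, so J_m(i,i) <= d U J_(m-S)(i,k), where U bounds all entries of short
   products. Since |m - n| <= B, periodicity provides a tail from k to i of length n - m + S; its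
   entry is at least the least positive entry c of short products, so J_n(i,i) >= c J_(m-S)(i,k).
   Hence J_m(i,i) / J_n(i,i) <= d U / c; small m are covered by the same constants. *)

theory Submission
  imports Defs
begin

lemma mat_list_prod_Nil [simp]: "mat_list_prod [] = mat 1"
  by (simp add: mat_list_prod_def)

lemma mat_list_prod_Cons [simp]: "mat_list_prod (A # As) = A ** mat_list_prod As"
  by (simp add: mat_list_prod_def)

lemma mat_list_prod_append: "mat_list_prod (As @ Bs) = mat_list_prod As ** mat_list_prod Bs"
  by (induction As) (simp_all add: matrix_mul_assoc)

lemma matrix_mul_entry: "(P ** Q) $ k $ l = (\<Sum>j\<in>UNIV. P $ k $ j * Q $ j $ l)"
  by (simp add: matrix_matrix_mult_def)

lemma matrix_mul_entry_nonneg: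
  fixes P Q :: "real^'n^'n"
  assumes "\<forall>a b. 0 \<le> P $ a $ b" "\<forall>a b. 0 \<le> Q $ a $ b"
  shows "0 \<le> (P ** Q) $ k $ l"
  using assms by (simp add: matrix_mul_entry sum_nonneg)

lemma mat_list_prod_nonneg:
  assumes "\<And>A a b. A \<in> set As \<Longrightarrow> 0 \<le> A $ a $ b"
  shows "0 \<le> mat_list_prod As $ k $ l"
  using assms
  by (induction As arbitrary: k l) (auto simp: mat_def intro!: matrix_mul_entry_nonneg)

lemma matrix_mul_entry_ge:
  fixes P Q :: "real^'n^'n"
  assumes "\<forall>a b. 0 \<le> P $ a $ b" "\<forall>a b. 0 \<le> Q $ a $ b"
  shows "P $ k $ j * Q $ j $ l \<le> (P ** Q) $ k $ l"
  unfolding matrix_mul_entry using assms by (intro member_le_sum) auto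

lemma matrix_mul_entry_le_card:
  fixes P Q :: "real^'n^'n"
  obtains j where "(P ** Q) $ k $ l \<le> CARD('n) * (P $ k $ j * Q $ j $ l)"
proof -
  define f where "f j = P $ k $ j * Q $ j $ l" for j
  have "Max (range f) \<in> range f"
    by (intro Max_in) auto
  then obtain j where j: "Max (range f) = f j"
    by blast
  have "(\<Sum>j'\<in>UNIV. f j') \<le> CARD('n) * f j"
    by (intro sum_bounded_above) (simp flip: j)
  then show thesis using that unfolding matrix_mul_entry f_def by auto
qed

context
  fixes L :: "nat set"
  assumes zero_mem: "0 \<in> L" and add_mem: "\<And>a b. a \<in> L \<Longrightarrow> b \<in> L \<Longrightarrow> a + b \<in> L"
begin

lemma submonoid_mult_mem: "a \<in> L \<Longrightarrow> q * a \<in> L"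
  by (induction q) (simp_all add: zero_mem add_mem)

lemma submonoid_mult_mem_if_consecutive_multiples:
  assumes "p * g \<in> L" "Suc p * g \<in> L" "p * p \<le> q"
  shows "q * g \<in> L"
proof (cases "p = 0")
  case True
  then show ?thesis using assms(2) submonoid_mult_mem[of g q] by simp
next
  case False
  define a b where "a = q div p" and "b = q mod p"
  have "b < p"
    using False by (simp add: b_def)
  have "p \<le> a"
    using div_le_mono[OF assms(3), of p] False by (simp add: a_def)
  have "(a - b) * p + b * p = a * p"
    using \<open>b < p\<close> \<open>p \<le> a\<close> by (simp flip: add_mult_distrib)
  moreover have "q = a * p + b"
    by (simp add: a_def b_def)
  ultimately have "q = (a - b) * p + b * Suc p"
    by simp
  then have "q * g = (a - b) * (p * g) + b * (Suc p * g)"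
    by (simp add: algebra_simps)
  then show ?thesis using assms(1,2) by (simp add: add_mem submonoid_mult_mem)
qed

lemma submonoid_eventually_contains_multiples:
  assumes "p \<in> L" "0 < p"
  obtains g P where "0 < g" "\<And>x. x \<in> L \<Longrightarrow> g dvd x" "\<And>q. P \<le> q \<Longrightarrow> q * g \<in> L"
proof -
  define g where "g = (LEAST d. 0 < d \<and> (\<exists>y\<in>L. y + d \<in> L))"
  have "0 < p \<and> (\<exists>y\<in>L. y + p \<in> L)"
    using assms zero_mem by (metis add_0)
  then have "0 < g \<and> (\<exists>y\<in>L. y + g \<in> L)"
    unfolding g_def by (rule LeastI)
  then obtain y where "0 < g" "y \<in> L" "y + g \<in> L"
    by blast
  have g_least: "g \<le> d" if "0 < d" "z \<in> L" "z + d \<in> L" for d z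
    unfolding g_def using that by (intro Least_le) blast
  \<comment> \<open>If g did not divide x, then x mod g would be a smaller gap between two elements of L.\<close>
  have g_dvd: "g dvd x" if "x \<in> L" for x
  proof (rule ccontr)
    assume "\<not> g dvd x"
    then have "0 < x mod g"
      by (simp add: dvd_eq_mod_eq_0)
    moreover have "x div g * (y + g) \<in> L"
      using \<open>y + g \<in> L\<close> by (rule submonoid_mult_mem)
    moreover have "x div g * (y + g) + x mod g = x div g * y + x"
      by (simp add: algebra_simps)
    then have "x div g * (y + g) + x mod g \<in> L"
      using \<open>x \<in> L\<close> \<open>y \<in> L\<close> by (simp only:) (intro add_mem submonoid_mult_mem)
    ultimately have "g \<le> x mod g"
      by (rule g_least)
    then show False
      using mod_less_divisor[OF \<open>0 < g\<close>, of x] by linarith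
  qed
  obtain k where "y = k * g"
    using g_dvd[OF \<open>y \<in> L\<close>] by (metis dvd_def mult.commute)
  then have "k * g \<in> L" "Suc k * g \<in> L"
    using \<open>y \<in> L\<close> \<open>y + g \<in> L\<close> by (simp_all add: add.commute)
  then have "q * g \<in> L" if "k * k \<le> q" for q
    using that by (rule submonoid_mult_mem_if_consecutive_multiples)
  then show thesis
    using that \<open>0 < g\<close> g_dvd by blast
qed

end

lemma finite_real_set_bounds:
  fixes A :: "real set"
  assumes "finite A"
  obtains c U where "0 < c" "\<And>x. x \<in> A \<Longrightarrow> x \<le> U" "\<And>x. x \<in> A \<Longrightarrow> 0 < x \<Longrightarrow> c \<le> x"
proof
  let ?pos = "insert 1 {x \<in> A. 0 < x}"
  show "0 < Min ?pos"
    using assms by (subst Min_gr_iff) auto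
  show "x \<le> Max (insert 0 A)" if "x \<in> A" for x
    using assms that by simp
  show "Min ?pos \<le> x" if "x \<in> A" "0 < x" for x
    using assms that by (intro Min_le) auto
qed

locale nonneg_matrix_set =
  fixes \<Sigma> :: "(real^'n^'n) set"
  assumes finite_mats: "finite \<Sigma>" and nonempty_mats: "\<Sigma> \<noteq> {}"
    and nonneg_entries: "A \<in> \<Sigma> \<Longrightarrow> 0 \<le> A $ k $ l"
begin

lemma prod_entry_nonneg: "set As \<subseteq> \<Sigma> \<Longrightarrow> 0 \<le> mat_list_prod As $ k $ l"
  by (rule mat_list_prod_nonneg) (auto intro: nonneg_entries)

lemma prod_le_joint_entry_max:
  assumes "set As \<subseteq> \<Sigma>" "length As = t"
  shows "mat_list_prod As $ k $ l \<le> joint_entry_max \<Sigma> t k l"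
  unfolding joint_entry_max_def
  using assms finite_lists_length_eq[OF finite_mats, of t] by (intro Max_ge) auto

lemma joint_entry_max_attained:
  obtains As where "set As \<subseteq> \<Sigma>" "length As = t" "mat_list_prod As $ k $ l = joint_entry_max \<Sigma> t k l"
proof -
  let ?Ls = "{As. set As \<subseteq> \<Sigma> \<and> length As = t}"
  have E: "{mat_list_prod As $ k $ l | As. set As \<subseteq> \<Sigma> \<and> length As = t}
      = (\<lambda>As. mat_list_prod As $ k $ l) ` ?Ls"
    by blast
  obtain A where "A \<in> \<Sigma>"
    using nonempty_mats by blast
  then have "replicate t A \<in> ?Ls"
    by (simp add: set_replicate_conv_if)
  then have "Max ((\<lambda>As. mat_list_prod As $ k $ l) ` ?Ls) \<in> (\<lambda>As. mat_list_prod As $ k $ l) ` ?Ls"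
    using finite_lists_length_eq[OF finite_mats, of t] by (intro Max_in) auto
  then obtain As where "As \<in> ?Ls" "Max ((\<lambda>As. mat_list_prod As $ k $ l) ` ?Ls) = mat_list_prod As $ k $ l"
    by blast
  moreover have "joint_entry_max \<Sigma> t k l = Max ((\<lambda>As. mat_list_prod As $ k $ l) ` ?Ls)"
    unfolding joint_entry_max_def E ..
  ultimately show thesis
    using that by auto
qed

lemma joint_entry_max_nonneg: "0 \<le> joint_entry_max \<Sigma> t k l"
proof -
  obtain As where "set As \<subseteq> \<Sigma>" "mat_list_prod As $ k $ l = joint_entry_max \<Sigma> t k l"
    by (rule joint_entry_max_attained)
  then show ?thesis
    using prod_entry_nonneg by metis
qed

lemma joint_entry_max_0: "joint_entry_max \<Sigma> 0 k l = mat 1 $ k $ l"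
proof -
  obtain As where "length As = 0" "mat_list_prod As $ k $ l = joint_entry_max \<Sigma> 0 k l"
    by (rule joint_entry_max_attained)
  then show ?thesis
    by simp
qed

lemma joint_entry_max_add_ge:
  "joint_entry_max \<Sigma> a k j * joint_entry_max \<Sigma> b j l \<le> joint_entry_max \<Sigma> (a + b) k l"
proof -
  obtain As where As: "set As \<subseteq> \<Sigma>" "length As = a" "mat_list_prod As $ k $ j = joint_entry_max \<Sigma> a k j"
    by (rule joint_entry_max_attained)
  obtain Bs where Bs: "set Bs \<subseteq> \<Sigma>" "length Bs = b" "mat_list_prod Bs $ j $ l = joint_entry_max \<Sigma> b j l"
    by (rule joint_entry_max_attained)
  have "mat_list_prod As $ k $ j * mat_list_prod Bs $ j $ l \<le> mat_list_prod (As @ Bs) $ k $ l"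
    unfolding mat_list_prod_append using As(1) Bs(1)
    by (intro matrix_mul_entry_ge) (auto intro: prod_entry_nonneg)
  also have "\<dots> \<le> joint_entry_max \<Sigma> (a + b) k l"
    using As Bs by (intro prod_le_joint_entry_max) auto
  finally show ?thesis
    using As(3) Bs(3) by simp
qed

lemma joint_entry_max_add_pos:
  assumes "0 < joint_entry_max \<Sigma> a k j" "0 < joint_entry_max \<Sigma> b j l"
  shows "0 < joint_entry_max \<Sigma> (a + b) k l"
  using mult_pos_pos[OF assms] joint_entry_max_add_ge by (rule less_le_trans)

lemma joint_entry_max_add_le:
  obtains j where
    "joint_entry_max \<Sigma> (a + b) k l \<le> CARD('n) * (joint_entry_max \<Sigma> a k j * joint_entry_max \<Sigma> b j l)"
proof -
  obtain Cs where Cs: "set Cs \<subseteq> \<Sigma>" "length Cs = a + b"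
    "mat_list_prod Cs $ k $ l = joint_entry_max \<Sigma> (a + b) k l"
    by (rule joint_entry_max_attained)
  define As Bs where "As = take a Cs" and "Bs = drop a Cs"
  have As: "set As \<subseteq> \<Sigma>" "length As = a"
    using Cs(1,2) set_take_subset[of a Cs] by (auto simp: As_def)
  have Bs: "set Bs \<subseteq> \<Sigma>" "length Bs = b"
    using Cs(1,2) set_drop_subset[of a Cs] by (auto simp: Bs_def)
  obtain j where j: "(mat_list_prod As ** mat_list_prod Bs) $ k $ l
      \<le> CARD('n) * (mat_list_prod As $ k $ j * mat_list_prod Bs $ j $ l)"
    by (rule matrix_mul_entry_le_card)
  have "joint_entry_max \<Sigma> (a + b) k l = (mat_list_prod As ** mat_list_prod Bs) $ k $ l"
    by (simp add: As_def Bs_def flip: Cs(3) mat_list_prod_append)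
  also have "\<dots> \<le> CARD('n) * (mat_list_prod As $ k $ j * mat_list_prod Bs $ j $ l)"
    by (fact j)
  also have "\<dots> \<le> CARD('n) * (joint_entry_max \<Sigma> a k j * joint_entry_max \<Sigma> b j l)"
    using As Bs
    by (intro mult_left_mono mult_mono prod_le_joint_entry_max prod_entry_nonneg joint_entry_max_nonneg) simp_all
  finally show thesis
    by (rule that)
qed

lemma joint_entry_max_add_le_pos:
  assumes "0 < joint_entry_max \<Sigma> (a + b) k l"
  obtains j where "0 < joint_entry_max \<Sigma> a k j" "0 < joint_entry_max \<Sigma> b j l"
    "joint_entry_max \<Sigma> (a + b) k l \<le> CARD('n) * (joint_entry_max \<Sigma> a k j * joint_entry_max \<Sigma> b j l)"
proof -
  obtain j where j: "joint_entry_max \<Sigma> (a + b) k l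
      \<le> CARD('n) * (joint_entry_max \<Sigma> a k j * joint_entry_max \<Sigma> b j l)"
    by (rule joint_entry_max_add_le)
  with assms have "0 < CARD('n) * (joint_entry_max \<Sigma> a k j * joint_entry_max \<Sigma> b j l)"
    by linarith
  then have "0 < joint_entry_max \<Sigma> a k j * joint_entry_max \<Sigma> b j l"
    by (simp add: zero_less_mult_iff)
  then have "0 < joint_entry_max \<Sigma> a k j" "0 < joint_entry_max \<Sigma> b j l"
    using joint_entry_max_nonneg[of a k j] by (auto simp: zero_less_mult_iff)
  then show thesis
    using that j by blast
qed

lemma joint_entry_max_bounds_upto:
  obtains c U where "0 < c" "0 \<le> U"
    "\<And>t k l. t \<le> T \<Longrightarrow> joint_entry_max \<Sigma> t k l \<le> U"
    "\<And>t k l. t \<le> T \<Longrightarrow> 0 < joint_entry_max \<Sigma> t k l \<Longrightarrow> c \<le> joint_entry_max \<Sigma> t k l"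
proof -
  let ?A = "(\<lambda>(t, k, l). joint_entry_max \<Sigma> t k l) ` ({..T} \<times> UNIV \<times> UNIV)"
  have A: "joint_entry_max \<Sigma> t k l \<in> ?A" if "t \<le> T" for t k l
    using that by (intro image_eqI[where x = "(t, k, l)"]) simp_all
  have "finite ?A"
    by simp
  then obtain c U where "0 < c" and "\<And>x. x \<in> ?A \<Longrightarrow> x \<le> U" and "\<And>x. x \<in> ?A \<Longrightarrow> 0 < x \<Longrightarrow> c \<le> x"
    using finite_real_set_bounds by blast
  with A have U: "\<And>t k l. t \<le> T \<Longrightarrow> joint_entry_max \<Sigma> t k l \<le> U"
    and c: "\<And>t k l. t \<le> T \<Longrightarrow> 0 < joint_entry_max \<Sigma> t k l \<Longrightarrow> c \<le> joint_entry_max \<Sigma> t k l"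
    by blast+
  moreover have "0 \<le> U"
    using U[of 0] joint_entry_max_nonneg order_trans by blast
  ultimately show thesis
    using that \<open>0 < c\<close> by blast
qed

lemma eventually_returns:
  assumes "0 < p" "0 < joint_entry_max \<Sigma> p i i"
  obtains R where "\<And>k s a t. 0 < joint_entry_max \<Sigma> s k i \<Longrightarrow> 0 < joint_entry_max \<Sigma> a i k \<Longrightarrow>
    0 < joint_entry_max \<Sigma> (a + t) i i \<Longrightarrow> R \<le> t \<Longrightarrow> 0 < joint_entry_max \<Sigma> t k i"
proof -
  let ?L = "{s. 0 < joint_entry_max \<Sigma> s i i}"
  have "0 \<in> ?L"
    by (simp add: joint_entry_max_0 mat_def)
  moreover have "a + b \<in> ?L" if "a \<in> ?L" "b \<in> ?L" for a b
    using that joint_entry_max_add_pos by simp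
  ultimately obtain g P where g: "0 < g" and g_dvd: "\<And>x. x \<in> ?L \<Longrightarrow> g dvd x"
    and P: "\<And>q. P \<le> q \<Longrightarrow> q * g \<in> ?L"
    using assms submonoid_eventually_contains_multiples[of ?L p] by blast
  define s0 where "s0 k = (LEAST s. 0 < joint_entry_max \<Sigma> s k i)" for k
  show thesis
  proof (rule that)
    fix k s a t
    assume s: "0 < joint_entry_max \<Sigma> s k i" and a: "0 < joint_entry_max \<Sigma> a i k"
      and at: "0 < joint_entry_max \<Sigma> (a + t) i i" and t: "(\<Sum>k\<in>UNIV. s0 k) + P * g \<le> t"
    have s0: "0 < joint_entry_max \<Sigma> (s0 k) k i"
      unfolding s0_def using s by (rule LeastI)
    have "s0 k \<le> (\<Sum>k\<in>UNIV. s0 k)"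
      by (rule member_le_sum) simp_all
    then have t_split: "t = s0 k + (t - s0 k)" and "P * g \<le> t - s0 k"
      using t by simp_all
    \<comment> \<open>Both a + s0 k and a + t are lengths of closed walks at i, so t = s0 k (mod g).\<close>
    have "g dvd a + s0 k"
      using g_dvd joint_entry_max_add_pos[OF a s0] by simp
    moreover have "g dvd (a + s0 k) + (t - s0 k)"
      using g_dvd at t_split by (simp add: add.assoc flip: t_split)
    ultimately have "g dvd t - s0 k"
      by (simp add: dvd_add_right_iff)
    then obtain q where q: "t - s0 k = q * g"
      by (metis dvd_def mult.commute)
    with \<open>P * g \<le> t - s0 k\<close> g have "P \<le> q"
      by simp
    then have "0 < joint_entry_max \<Sigma> (t - s0 k) i i"
      using P q by simp
    then have "0 < joint_entry_max \<Sigma> (s0 k + (t - s0 k)) k i"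
      by (rule joint_entry_max_add_pos[OF s0])
    then show "0 < joint_entry_max \<Sigma> t k i"
      by (simp flip: t_split)
  qed
qed

lemma diag_ratio_bounded:
  assumes "0 < p" "0 < joint_entry_max \<Sigma> p i i"
  obtains C where "\<And>m n. m \<le> n + B \<Longrightarrow> n \<le> m + B \<Longrightarrow> 0 < joint_entry_max \<Sigma> n i i \<Longrightarrow>
    joint_entry_max \<Sigma> m i i / joint_entry_max \<Sigma> n i i \<le> C"
proof -
  obtain R where return: "\<And>k s a t. 0 < joint_entry_max \<Sigma> s k i \<Longrightarrow> 0 < joint_entry_max \<Sigma> a i k \<Longrightarrow>
    0 < joint_entry_max \<Sigma> (a + t) i i \<Longrightarrow> R \<le> t \<Longrightarrow> 0 < joint_entry_max \<Sigma> t k i"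
    using eventually_returns[OF assms] by blast
  define S where "S = R + B"
  obtain c U where "0 < c" "0 \<le> U"
    and U: "\<And>t k l. t \<le> S + B \<Longrightarrow> joint_entry_max \<Sigma> t k l \<le> U"
    and c: "\<And>t k l. t \<le> S + B \<Longrightarrow> 0 < joint_entry_max \<Sigma> t k l \<Longrightarrow> c \<le> joint_entry_max \<Sigma> t k l"
    using joint_entry_max_bounds_upto[of "S + B"] by blast
  show thesis
  proof (rule that)
    fix m n
    assume mn: "m \<le> n + B" "n \<le> m + B" and n: "0 < joint_entry_max \<Sigma> n i i"
    show "joint_entry_max \<Sigma> m i i / joint_entry_max \<Sigma> n i i \<le> CARD('n) * U / c"
    proof (cases "m < S")
      case True
      then have "joint_entry_max \<Sigma> m i i \<le> U" "c \<le> joint_entry_max \<Sigma> n i i"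
        using U c n mn by simp_all
      then have "joint_entry_max \<Sigma> m i i / joint_entry_max \<Sigma> n i i \<le> U / c"
        using \<open>0 \<le> U\<close> \<open>0 < c\<close> by (intro frac_le)
      also have "\<dots> \<le> CARD('n) * U / c"
        using \<open>0 \<le> U\<close> \<open>0 < c\<close> by (simp add: divide_right_mono mult_le_cancel_right1)
      finally show ?thesis .
    next
      case False
      show ?thesis
      proof (cases "joint_entry_max \<Sigma> m i i = 0")
        case True
        then show ?thesis
          using \<open>0 \<le> U\<close> \<open>0 < c\<close> by simp
      next
        case False
        with \<open>\<not> m < S\<close> have "0 < joint_entry_max \<Sigma> (m - S + S) i i"
          using joint_entry_max_nonneg[of m i i] by simp
        then obtain k where x: "0 < joint_entry_max \<Sigma> (m - S) i k" and y: "0 < joint_entry_max \<Sigma> S k i"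
          and split: "joint_entry_max \<Sigma> (m - S + S) i i
            \<le> CARD('n) * (joint_entry_max \<Sigma> (m - S) i k * joint_entry_max \<Sigma> S k i)"
          by (rule joint_entry_max_add_le_pos)
        define t where "t = n + S - m"
        have t: "m - S + t = n" "R \<le> t" "t \<le> S + B"
          using \<open>\<not> m < S\<close> mn by (simp_all add: t_def S_def)
        have "joint_entry_max \<Sigma> (m - S) i k * c \<le> joint_entry_max \<Sigma> (m - S) i k * joint_entry_max \<Sigma> t k i"
          using c[OF t(3)] return[OF y x] n t(1,2) x by simp
        also have "\<dots> \<le> joint_entry_max \<Sigma> n i i"
          using joint_entry_max_add_ge[of "m - S" i k t i] t(1) by simp
        finally have lower: "joint_entry_max \<Sigma> (m - S) i k * c \<le> joint_entry_max \<Sigma> n i i" .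
        have upper: "joint_entry_max \<Sigma> m i i \<le> CARD('n) * (joint_entry_max \<Sigma> (m - S) i k * U)"
          using split \<open>\<not> m < S\<close> U[of S k i] x by (simp add: order_trans)
        have "joint_entry_max \<Sigma> m i i / joint_entry_max \<Sigma> n i i
            \<le> CARD('n) * (joint_entry_max \<Sigma> (m - S) i k * U) / (joint_entry_max \<Sigma> (m - S) i k * c)"
          using lower upper x \<open>0 \<le> U\<close> \<open>0 < c\<close> by (intro frac_le) simp_all
        also have "\<dots> = CARD('n) * U / c"
          using x by simp
        finally show ?thesis .
      qed
    qed
  qed
qed

end

theorem proposition1:
  fixes \<Sigma> :: "(real^'n^'n) set" and i :: 'n
  assumes "finite \<Sigma>" and "\<Sigma> \<noteq> {}"
    and "\<forall>A\<in>\<Sigma>. \<forall>k l. A $ k $ l \<ge> 0"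
  shows "\<forall>B::real. B \<ge> 0 \<longrightarrow> (\<exists>C::real. \<forall>m n::nat.
           m > 0 \<and> n > 0 \<and> \<bar>real m - real n\<bar> \<le> B \<and> joint_entry_max \<Sigma> n i i > 0
           \<longrightarrow> joint_entry_max \<Sigma> m i i / joint_entry_max \<Sigma> n i i \<le> C)"
proof (intro allI impI)
  fix B :: real
  interpret nonneg_matrix_set \<Sigma>
    using assms by unfold_locales auto
  show "\<exists>C. \<forall>m n. 0 < m \<and> 0 < n \<and> \<bar>real m - real n\<bar> \<le> B \<and> 0 < joint_entry_max \<Sigma> n i i
      \<longrightarrow> joint_entry_max \<Sigma> m i i / joint_entry_max \<Sigma> n i i \<le> C"
  proof (cases "\<exists>p>0. 0 < joint_entry_max \<Sigma> p i i")
    case True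
    then obtain p where "0 < p" "0 < joint_entry_max \<Sigma> p i i"
      by blast
    then obtain C where C: "\<And>m n. m \<le> n + nat \<lceil>B\<rceil> \<Longrightarrow> n \<le> m + nat \<lceil>B\<rceil> \<Longrightarrow>
        0 < joint_entry_max \<Sigma> n i i \<Longrightarrow> joint_entry_max \<Sigma> m i i / joint_entry_max \<Sigma> n i i \<le> C"
      using diag_ratio_bounded[where B = "nat \<lceil>B\<rceil>"] by blast
    have "B \<le> real (nat \<lceil>B\<rceil>)"
      by linarith
    then show ?thesis
      by (intro exI[of _ C] allI impI C) linarith+
  next
    case False
    then show ?thesis
      by (intro exI[of _ 0]) blast
  qed
qed

end
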